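(* Let $D\subset\mathbb N^n$ be finite and not contained in any coordinate hyperplane, $p$ a prime and $r\ge1$. Let $(u_{\mathbf d})_{\mathbf d\in D}$ be nonnegative integers such that $\sum_{\mathbf d}u_{\mathbf d}\mathbf d\equiv0\pmod{p^r-1}$ and $\sum_{\mathbf d}u_{\mathbf d}\mathbf d$ has all coordinates positive. Then $\sum_{\mathbf d}s_p(u_{\mathbf d})\ge s_{D,p}(r)$.
   Context: $s_p(u)$ is the sum of the base-$p$ digits of $u$. $E_{D,p}(r)$ is the set of $U=(u_{\mathbf d})\in\{0,\dots,p^r-1\}^D$ with $\sum u_{\mathbf d}\mathbf d\equiv0\pmod{p^r-1}$ (coordinatewise) and all coordinates of $\sum u_{\mathbf d}\mathbf d$ positive, and $s_{D,p}(r)=\min_{U\in E_{D,p}(r)}\sum_{\mathbf d}s_p(u_{\mathbf d})$. *)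

theory Defs
  imports "HOL-Analysis.Finite_Cartesian_Product" "HOL-Computational_Algebra.Primes"
begin

text \<open>Sum of the base-p digits of u (for p \<ge> 2); digit k is (u div p^k) mod p,
  and digits with index k > u vanish since p^k > u.\<close>
definition digit_sum :: "nat \<Rightarrow> nat \<Rightarrow> nat" where
  "digit_sum p u = (\<Sum>k<Suc u. (u div p ^ k) mod p)"

definition E_set :: "(nat ^ 'n) set \<Rightarrow> nat \<Rightarrow> nat \<Rightarrow> ((nat ^ 'n) \<Rightarrow> nat) set" where
  "E_set D p r = {U. (\<forall>d. d \<notin> D \<longrightarrow> U d = 0)
      \<and> (\<forall>d\<in>D. U d \<le> p ^ r - 1)
      \<and> (\<forall>i. (p ^ r - 1) dvd (\<Sum>d\<in>D. U d * d $ i))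
      \<and> (\<forall>i. 0 < (\<Sum>d\<in>D. U d * d $ i))}"

definition s_D :: "(nat ^ 'n) set \<Rightarrow> nat \<Rightarrow> nat \<Rightarrow> nat" where
  "s_D D p r = Min ((\<lambda>U. \<Sum>d\<in>D. digit_sum p (U d)) ` E_set D p r)"

end

theory Submission
  imports Defs
begin

text \<open>Write a witness u in base p^r as u = a p^r + b. Since p^r \<equiv> 1 modulo p^r - 1,
  replacing u by a + b keeps its residue and its vanishing, and by subadditivity of the
  digit sum, s_p(a + b) \<le> s_p(a) + s_p(b) = s_p(u), it does not increase the digit sum.
  Iterating folds every coordinate into {0..p^r-1}, giving an element of E_{D,p}(r)
  whose digit sum is at most that of u.\<close>

lemma digit_sum_eq_sum_lessThan:
  assumes p: "p \<ge> 2" and M: "M \<ge> Suc u"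
  shows "(\<Sum>k<M. (u div p ^ k) mod p) = digit_sum p u"
proof -
  have "(\<Sum>k\<in>{Suc u..<M}. (u div p ^ k) mod p) = 0"
  proof (rule sum.neutral, clarify)
    fix k assume "k \<in> {Suc u..<M}"
    then have "u < k" by simp
    then have "u < 2 ^ k" using less_exp[of k] by linarith
    also have "2 ^ k \<le> p ^ k" using p by (simp add: power_mono)
    finally show "(u div p ^ k) mod p = 0" by simp
  qed
  moreover have "(\<Sum>k<M. (u div p ^ k) mod p)
      = (\<Sum>k<Suc u. (u div p ^ k) mod p) + (\<Sum>k\<in>{Suc u..<M}. (u div p ^ k) mod p)"
    using M by (metis lessThan_atLeast0 sum.atLeastLessThan_concat zero_le)
  ultimately show ?thesis by (simp add: digit_sum_def)
qed

lemma digit_sum_rec: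
  assumes p: "p \<ge> 2"
  shows "digit_sum p u = u mod p + digit_sum p (u div p)"
proof -
  have "digit_sum p u = (\<Sum>k<Suc (Suc u). (u div p ^ k) mod p)"
    using p by (intro digit_sum_eq_sum_lessThan[symmetric]) auto
  also have "\<dots> = u mod p + (\<Sum>k<Suc u. ((u div p) div p ^ k) mod p)"
    by (subst sum.lessThan_Suc_shift) (simp add: div_mult2_eq)
  also have "(\<Sum>k<Suc u. ((u div p) div p ^ k) mod p) = digit_sum p (u div p)"
    using p by (intro digit_sum_eq_sum_lessThan) (auto simp: div_le_dividend)
  finally show ?thesis .
qed

lemma digit_sum_0 [simp]: "digit_sum p 0 = 0"
  by (simp add: digit_sum_def)

lemma digit_sum_mult_add:
  assumes "p \<ge> 2" and "b < p"
  shows "digit_sum p (p * a + b) = b + digit_sum p a"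
  using digit_sum_rec[of p "p * a + b"] assms by simp

lemma digit_sum_mult_power_add:
  assumes p: "p \<ge> 2" and "b < p ^ r"
  shows "digit_sum p (a * p ^ r + b) = digit_sum p a + digit_sum p b"
  using assms(2)
proof (induction r arbitrary: b)
  case (Suc r)
  have "b div p < p ^ r"
    using Suc.prems p by (simp add: div_less_iff_less_mult mult.commute)
  have "a * p ^ Suc r + b = p * (a * p ^ r + b div p) + b mod p"
    by (simp add: algebra_simps)
  then have "digit_sum p (a * p ^ Suc r + b) = b mod p + digit_sum p (a * p ^ r + b div p)"
    using p by (simp add: digit_sum_mult_add)
  also have "\<dots> = digit_sum p a + (b mod p + digit_sum p (b div p))"
    using Suc.IH[OF \<open>b div p < p ^ r\<close>] by simp
  finally show ?case using digit_sum_rec[OF p, of b] by simp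
qed simp

lemma digit_sum_Suc_le:
  assumes p: "p \<ge> 2"
  shows "digit_sum p (Suc n) \<le> digit_sum p n + 1"
proof (induction n rule: less_induct)
  case (less n)
  have n: "n = p * (n div p) + n mod p" by simp
  show ?case
  proof (cases "Suc (n mod p) < p")
    case True
    then have "digit_sum p (Suc n) = Suc (n mod p) + digit_sum p (n div p)"
      using p n digit_sum_mult_add by (metis add_Suc_right)
    then show ?thesis using digit_sum_rec[OF p, of n] by simp
  next
    case False
    then have "Suc (n mod p) = p" using mod_less_divisor[of p n] p by linarith
    then have "Suc n = p * Suc (n div p) + 0"
      using n by (metis add_Suc_right add_0_right mult_Suc_right add.commute)
    then have "digit_sum p (Suc n) = digit_sum p (Suc (n div p))"
      using p by (simp only:) (subst digit_sum_mult_add, auto)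
    also have "\<dots> \<le> digit_sum p (n div p) + 1"
    proof (rule less.IH)
      have "n \<noteq> 0" using False p by (cases n) auto
      then show "n div p < n" using p by simp
    qed
    finally show ?thesis using digit_sum_rec[OF p, of n] by simp
  qed
qed

lemma digit_sum_add_le_add:
  assumes "p \<ge> 2"
  shows "digit_sum p (m + k) \<le> digit_sum p m + k"
proof (induction k)
  case (Suc k)
  then show ?case using digit_sum_Suc_le[OF assms, of "m + k"] by simp
qed simp

lemma digit_sum_mult_add_le:
  assumes p: "p \<ge> 2"
  shows "digit_sum p (p * m + c) \<le> digit_sum p m + c"
proof -
  have "p * m + c = p * (m + c div p) + c mod p" by (simp add: algebra_simps)
  then have "digit_sum p (p * m + c) = c mod p + digit_sum p (m + c div p)"
    using p by (simp add: digit_sum_mult_add)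
  also have "\<dots> \<le> c mod p + (digit_sum p m + c div p)"
    using digit_sum_add_le_add[OF p] by simp
  also have "c div p \<le> c div p * p" using p by simp
  then have "c mod p + (digit_sum p m + c div p) \<le> digit_sum p m + c"
    using div_mult_mod_eq[of c p] by linarith
  finally show ?thesis .
qed

lemma digit_sum_add_le:
  assumes p: "p \<ge> 2"
  shows "digit_sum p (a + b) \<le> digit_sum p a + digit_sum p b"
proof (induction "a + b" arbitrary: a b rule: less_induct)
  case less
  show ?case
  proof (cases "a + b = 0")
    case False
    have "a div p + b div p < a + b"
      using False p by (cases "a = 0")
        (auto intro: add_le_less_mono add_less_le_mono div_le_dividend div_less_dividend)
    then have IH: "digit_sum p (a div p + b div p)
        \<le> digit_sum p (a div p) + digit_sum p (b div p)"
      by (rule less.hyps)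
    have "a + b = p * (a div p + b div p) + (a mod p + b mod p)"
      by (simp add: algebra_simps)
    then have "digit_sum p (a + b) \<le> digit_sum p (a div p + b div p) + (a mod p + b mod p)"
      using digit_sum_mult_add_le[OF p] by metis
    then show ?thesis
      using IH digit_sum_rec[OF p, of a] digit_sum_rec[OF p, of b] by linarith
  qed simp
qed

lemma exists_small_congruent_digit_sum_le:
  assumes p: "p \<ge> 2" and r: "r \<ge> 1"
  shows "\<exists>v \<le> p ^ r - 1. v mod (p ^ r - 1) = u mod (p ^ r - 1) \<and> (v = 0 \<longleftrightarrow> u = 0)
           \<and> digit_sum p v \<le> digit_sum p u"
proof (induction u rule: less_induct)
  case (less u)
  have "p ^ 1 \<le> p ^ r" using p r by (intro power_increasing) auto
  then have pr: "p ^ r \<ge> 2" using p by simp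
  show ?case
  proof (cases "u \<le> p ^ r - 1")
    case False
    define a b where "a = u div p ^ r" and "b = u mod p ^ r"
    have u: "u = a * p ^ r + b" unfolding a_def b_def by (rule div_mult_mod_eq[symmetric])
    have "p ^ r \<le> u" using False pr by linarith
    then have "a \<ge> 1" using p pr unfolding a_def by (simp add: div_greater_zero_iff Suc_le_eq)
    have "b < p ^ r" using pr unfolding b_def by (intro mod_less_divisor) linarith
    have "a * 2 \<le> a * p ^ r" using pr by (intro mult_le_mono2)
    then have "a + b < u" using u \<open>a \<ge> 1\<close> by linarith
    then obtain v where v: "v \<le> p ^ r - 1" "v mod (p ^ r - 1) = (a + b) mod (p ^ r - 1)"
      "v = 0 \<longleftrightarrow> a + b = 0" "digit_sum p v \<le> digit_sum p (a + b)"
      using less.IH by blast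
    obtain N where "p ^ r = Suc N" using pr by (cases "p ^ r") auto
    then have "u = a * (p ^ r - 1) + (a + b)" using u by simp
    then have "u mod (p ^ r - 1) = (a + b) mod (p ^ r - 1)" by simp
    moreover have "digit_sum p (a + b) \<le> digit_sum p u"
      using digit_sum_add_le[OF p, of a b] digit_sum_mult_power_add[OF p \<open>b < p ^ r\<close>] u
      by simp
    ultimately show ?thesis using v \<open>a \<ge> 1\<close> False by auto
  qed blast
qed

lemma weighted_sum_mod_cong:
  assumes "\<And>d. d \<in> D \<Longrightarrow> U d mod N = u d mod N"
  shows "(\<Sum>d\<in>D. U d * w d) mod (N::nat) = (\<Sum>d\<in>D. u d * w d) mod N"
proof -
  have "(\<Sum>d\<in>D. U d * w d) mod N = (\<Sum>d\<in>D. U d * w d mod N) mod N"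
    by (simp add: mod_sum_eq)
  also have "(\<Sum>d\<in>D. U d * w d mod N) = (\<Sum>d\<in>D. u d * w d mod N)"
    using assms by (intro sum.cong) (auto intro: mod_mult_cong)
  also have "(\<Sum>d\<in>D. u d * w d mod N) mod N = (\<Sum>d\<in>D. u d * w d) mod N"
    by (simp add: mod_sum_eq)
  finally show ?thesis .
qed

lemma weighted_sum_pos_cong:
  assumes "finite D" and "\<And>d. d \<in> D \<Longrightarrow> U d = 0 \<longleftrightarrow> u d = 0"
    and "0 < (\<Sum>d\<in>D. u d * w d)"
  shows "0 < (\<Sum>d\<in>D. U d * (w d :: nat))"
proof -
  have "\<exists>d\<in>D. u d * w d \<noteq> 0"
  proof (rule ccontr)
    assume "\<not> (\<exists>d\<in>D. u d * w d \<noteq> 0)"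
    then have "(\<Sum>d\<in>D. u d * w d) = 0" by (intro sum.neutral) auto
    with assms(3) show False by simp
  qed
  then obtain d where "d \<in> D" "u d * w d \<noteq> 0" by blast
  then have "0 < U d * w d" using assms(2)[OF \<open>d \<in> D\<close>] by simp
  also have "\<dots> \<le> (\<Sum>d\<in>D. U d * w d)"
    using \<open>d \<in> D\<close> assms(1) by (intro member_le_sum) auto
  finally show ?thesis .
qed

lemma finite_E_set:
  assumes "finite D"
  shows "finite (E_set D p r)"
proof (rule finite_subset)
  show "E_set D p r \<subseteq> {U. \<forall>d. (d \<in> D \<longrightarrow> U d \<in> {..p ^ r - 1}) \<and> (d \<notin> D \<longrightarrow> U d = 0)}"
    unfolding E_set_def by auto
  show "finite {U. \<forall>d. (d \<in> D \<longrightarrow> U d \<in> {..p ^ r - 1}) \<and> (d \<notin> D \<longrightarrow> U d = (0::nat))}"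
    using assms by (intro finite_set_of_finite_funs) auto
qed

lemma s_D_le:
  assumes "finite D" and "U \<in> E_set D p r"
  shows "s_D D p r \<le> (\<Sum>d\<in>D. digit_sum p (U d))"
  unfolding s_D_def using assms finite_E_set by (intro Min_le) auto

theorem lemma2p4:
  fixes D :: "(nat ^ 'n) set" and p r :: nat and u :: "nat ^ 'n \<Rightarrow> nat"
  assumes "finite D"
    and "\<forall>i. \<exists>d\<in>D. d $ i \<noteq> 0"
    and "prime p" and "r \<ge> 1"
    and "\<forall>i. (p ^ r - 1) dvd (\<Sum>d\<in>D. u d * d $ i)"
    and "\<forall>i. 0 < (\<Sum>d\<in>D. u d * d $ i)"
  shows "(\<Sum>d\<in>D. digit_sum p (u d)) \<ge> s_D D p r"
proof -
  have p: "p \<ge> 2" using \<open>prime p\<close> prime_ge_2_nat by blast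
  have "\<forall>d. \<exists>v. v \<le> p ^ r - 1 \<and> v mod (p ^ r - 1) = u d mod (p ^ r - 1)
      \<and> (v = 0 \<longleftrightarrow> u d = 0) \<and> digit_sum p v \<le> digit_sum p (u d)"
    using exists_small_congruent_digit_sum_le[OF p \<open>r \<ge> 1\<close>] by blast
  then obtain f where f: "\<And>d. f d \<le> p ^ r - 1" "\<And>d. f d mod (p ^ r - 1) = u d mod (p ^ r - 1)"
    "\<And>d. f d = 0 \<longleftrightarrow> u d = 0" "\<And>d. digit_sum p (f d) \<le> digit_sum p (u d)"
    by (metis (no_types))
  define U where "U d = (if d \<in> D then f d else 0)" for d
  have "(p ^ r - 1) dvd (\<Sum>d\<in>D. U d * d $ i)" for i
    using assms(5) weighted_sum_mod_cong[of D U "p ^ r - 1" u "\<lambda>d. d $ i"] f(2)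
    by (simp add: U_def dvd_eq_mod_eq_0)
  moreover have "0 < (\<Sum>d\<in>D. U d * d $ i)" for i
    by (rule weighted_sum_pos_cong[OF \<open>finite D\<close> _ assms(6)[rule_format]]) (simp add: U_def f(3))
  ultimately have "U \<in> E_set D p r"
    using f(1) unfolding E_set_def by (auto simp: U_def)
  then have "s_D D p r \<le> (\<Sum>d\<in>D. digit_sum p (U d))"
    by (rule s_D_le[OF \<open>finite D\<close>])
  also have "\<dots> \<le> (\<Sum>d\<in>D. digit_sum p (u d))"
    by (intro sum_mono) (simp add: U_def f(4))
  finally show ?thesis .
qed

end
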